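(* Let $B(\mathbb{R})$ be the C*-algebra of all bounded complex-valued functions on $\mathbb{R}$ (pointwise operations, supremum norm), and let $A=\{f\in B(\mathbb{R}): \{t: f(t)\neq 0\}\text{ is countable}\}$. Then $A$ is a non-unital, monotone $\sigma$-complete commutative C*-algebra (so its only maximal abelian self-adjoint subalgebra, $A$ itself, is monotone $\sigma$-complete), but $A$ is not a Rickart C*-algebra.
   Context: A C*-algebra $B$ is monotone $\sigma$-complete if every norm-bounded monotone increasing sequence in $B_{sa}$ has a supremum in $B_{sa}$. A C*-algebra $B$ is Rickart if for each $a\in B$ there is a projection $p\in B$ such that $\{z\in B: az=0\}=pB$. *)

theory Defs
  imports "HOL-Analysis.Analysis"
begin

text \<open>Subalgebras are treated as subsets of this concrete algebra.\<close>

type_synonym fn = "real \<Rightarrow> complex"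

definition BR :: "fn set" where
  "BR = {f. bounded (range f)}"

definition supnorm :: "fn \<Rightarrow> real" where
  "supnorm f = (SUP t. cmod (f t))"

definition fadd :: "fn \<Rightarrow> fn \<Rightarrow> fn" where "fadd f g = (\<lambda>t. f t + g t)"
definition fmul :: "fn \<Rightarrow> fn \<Rightarrow> fn" where "fmul f g = (\<lambda>t. f t * g t)"
definition fscale :: "complex \<Rightarrow> fn \<Rightarrow> fn" where "fscale c f = (\<lambda>t. c * f t)"
definition fstar :: "fn \<Rightarrow> fn" where "fstar f = (\<lambda>t. cnj (f t))"
definition fdiff :: "fn \<Rightarrow> fn \<Rightarrow> fn" where "fdiff f g = (\<lambda>t. f t - g t)"

definition A_alg :: "fn set" where
  "A_alg = {f \<in> BR. countable {t. f t \<noteq> 0}}"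

definition cstar_subalgebra :: "fn set \<Rightarrow> bool" where
  "cstar_subalgebra S \<longleftrightarrow> S \<subseteq> BR \<and> (\<lambda>t. 0) \<in> S \<and>
     (\<forall>f\<in>S. \<forall>g\<in>S. fadd f g \<in> S \<and> fmul f g \<in> S) \<and>
     (\<forall>c. \<forall>f\<in>S. fscale c f \<in> S) \<and> (\<forall>f\<in>S. fstar f \<in> S) \<and>
     (\<forall>x g. (\<forall>n. x n \<in> S) \<and> g \<in> BR \<and>
        (\<lambda>n. supnorm (fdiff (x n) g)) \<longlonglongrightarrow> 0 \<longrightarrow> g \<in> S)"

definition commutative_alg :: "fn set \<Rightarrow> bool" where
  "commutative_alg S \<longleftrightarrow> (\<forall>f\<in>S. \<forall>g\<in>S. fmul f g = fmul g f)"

definition unital_alg :: "fn set \<Rightarrow> bool" where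
  "unital_alg S \<longleftrightarrow> (\<exists>e\<in>S. \<forall>f\<in>S. fmul e f = f \<and> fmul f e = f)"

definition selfadj :: "fn \<Rightarrow> bool" where
  "selfadj f \<longleftrightarrow> fstar f = f"

definition positive_in :: "fn set \<Rightarrow> fn \<Rightarrow> bool" where
  "positive_in S a \<longleftrightarrow> (\<exists>b\<in>S. a = fmul (fstar b) b)"

definition le_in :: "fn set \<Rightarrow> fn \<Rightarrow> fn \<Rightarrow> bool" where
  "le_in S a b \<longleftrightarrow> positive_in S (fdiff b a)"

definition monotone_sigma_complete :: "fn set \<Rightarrow> bool" where
  "monotone_sigma_complete S \<longleftrightarrow>
    (\<forall>x :: nat \<Rightarrow> fn.
       (\<forall>n. x n \<in> S \<and> selfadj (x n)) \<and> (\<forall>n. le_in S (x n) (x (Suc n))) \<and>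
       (\<exists>M. \<forall>n. supnorm (x n) \<le> M) \<longrightarrow>
       (\<exists>s\<in>S. selfadj s \<and> (\<forall>n. le_in S (x n) s) \<and>
          (\<forall>u\<in>S. selfadj u \<and> (\<forall>n. le_in S (x n) u) \<longrightarrow> le_in S s u)))"

definition projection_in :: "fn set \<Rightarrow> fn \<Rightarrow> bool" where
  "projection_in S p \<longleftrightarrow> p \<in> S \<and> fstar p = p \<and> fmul p p = p"

definition rickart :: "fn set \<Rightarrow> bool" where
  "rickart S \<longleftrightarrow> (\<forall>a\<in>S. \<exists>p. projection_in S p \<and>
      {z \<in> S. fmul a z = (\<lambda>t. 0)} = {fmul p y | y. y \<in> S})"

end

theory Submission
  imports Defs
begin

text \<open>In a function algebra positivity is pointwise (\<open>b\<^sup>* b = \<bar>b\<bar>\<^sup>2\<close>, and a nonnegative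
  function is the square of its pointwise square root), so the order of \<open>A\<close> is the pointwise
  order and a bounded sequence of real functions in \<open>A\<close> has its pointwise supremum as
  supremum; the support of that supremum, like the support of a uniform limit, lies in the
  countable union of the supports. Since \<open>\<real>\<close> is uncountable, every \<open>f \<in> A\<close> vanishes at
  some \<open>t\<close>, while the indicator of \<open>{t}\<close> lies in \<open>A\<close>: so \<open>f\<close> is no unit, and if \<open>f\<close> is a
  projection then \<open>fA\<close> is not the annihilator of \<open>0\<close>, which is all of \<open>A\<close>.\<close>

lemma BR_iff: "f \<in> BR \<longleftrightarrow> (\<exists>M. \<forall>t. cmod (f t) \<le> M)"
  unfolding BR_def by (auto simp: bounded_iff)

lemma norm_le_supnorm: "f \<in> BR \<Longrightarrow> cmod (f t) \<le> supnorm f"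
  unfolding supnorm_def BR_iff by (rule cSUP_upper) (auto simp: bdd_above_def)

lemma BR_fadd: assumes "f \<in> BR" "g \<in> BR" shows "fadd f g \<in> BR"
proof -
  obtain M N where "\<forall>t. cmod (f t) \<le> M" "\<forall>t. cmod (g t) \<le> N"
    using assms unfolding BR_iff by blast
  then have "cmod (f t + g t) \<le> M + N" for t
    by (meson add_mono norm_triangle_le)
  then show ?thesis unfolding BR_iff fadd_def by blast
qed

lemma BR_fmul: assumes "f \<in> BR" "g \<in> BR" shows "fmul f g \<in> BR"
proof -
  obtain M N where "\<forall>t. cmod (f t) \<le> M" "\<forall>t. cmod (g t) \<le> N"
    using assms unfolding BR_iff by blast
  then have "cmod (f t * g t) \<le> M * N" for t
    by (simp add: norm_mult mult_mono')
  then show ?thesis unfolding BR_iff fmul_def by blast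
qed

lemma BR_fscale: assumes "f \<in> BR" shows "fscale c f \<in> BR"
proof -
  obtain M where "\<forall>t. cmod (f t) \<le> M" using assms unfolding BR_iff by blast
  then have "cmod (c * f t) \<le> cmod c * M" for t
    by (simp add: norm_mult mult_left_mono)
  then show ?thesis unfolding BR_iff fscale_def by blast
qed

lemma BR_fstar: "f \<in> BR \<Longrightarrow> fstar f \<in> BR"
  unfolding BR_iff fstar_def by simp

lemma fdiff_eq_fadd_fscale: "fdiff f g = fadd f (fscale (-1) g)"
  by (simp add: fdiff_def fadd_def fscale_def)

lemma BR_fdiff: "f \<in> BR \<Longrightarrow> g \<in> BR \<Longrightarrow> fdiff f g \<in> BR"
  by (simp add: fdiff_eq_fadd_fscale BR_fadd BR_fscale)

lemma A_alg_fadd: assumes "f \<in> A_alg" "g \<in> A_alg" shows "fadd f g \<in> A_alg"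
proof -
  have "{t. fadd f g t \<noteq> 0} \<subseteq> {t. f t \<noteq> 0} \<union> {t. g t \<noteq> 0}"
    by (auto simp: fadd_def)
  with assms show ?thesis unfolding A_alg_def by (auto intro: BR_fadd countable_subset)
qed

lemma A_alg_fmul: assumes "f \<in> A_alg" "g \<in> A_alg" shows "fmul f g \<in> A_alg"
proof -
  have "{t. fmul f g t \<noteq> 0} \<subseteq> {t. f t \<noteq> 0}"
    by (auto simp: fmul_def)
  with assms show ?thesis unfolding A_alg_def by (auto intro: BR_fmul countable_subset)
qed

lemma A_alg_fscale: assumes "f \<in> A_alg" shows "fscale c f \<in> A_alg"
proof -
  have "{t. fscale c f t \<noteq> 0} \<subseteq> {t. f t \<noteq> 0}"
    by (auto simp: fscale_def)
  with assms show ?thesis unfolding A_alg_def by (auto intro: BR_fscale countable_subset)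
qed

lemma A_alg_fstar: "f \<in> A_alg \<Longrightarrow> fstar f \<in> A_alg"
  unfolding A_alg_def by (simp add: BR_fstar) (simp add: fstar_def)

lemma A_alg_fdiff: "f \<in> A_alg \<Longrightarrow> g \<in> A_alg \<Longrightarrow> fdiff f g \<in> A_alg"
  by (simp add: fdiff_eq_fadd_fscale A_alg_fadd A_alg_fscale)

lemma indicator_singleton_in_A_alg: "indicator {t} \<in> A_alg"
proof -
  have "{s. (indicator {t} s :: complex) \<noteq> 0} = {t}" by (auto simp: indicator_def)
  moreover have "cmod (indicator {t} s :: complex) \<le> 1" for s
    by (simp add: indicator_def)
  ultimately show ?thesis unfolding A_alg_def BR_iff by auto
qed

lemma countable_support_imp_zero:
  fixes f :: "real \<Rightarrow> 'a::zero"
  assumes "countable {t. f t \<noteq> 0}"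
  obtains t where "f t = 0"
proof -
  have "{t. f t \<noteq> 0} \<noteq> UNIV" using assms uncountable_UNIV_real by auto
  then show ?thesis using that by blast
qed

lemma support_subset_of_uniform_limit:
  assumes "\<forall>n. x n \<in> BR" "g \<in> BR" and lim: "(\<lambda>n. supnorm (fdiff (x n) g)) \<longlonglongrightarrow> 0"
  shows "{t. g t \<noteq> 0} \<subseteq> (\<Union>n. {t. x n t \<noteq> 0})"
proof
  fix t assume "t \<in> {t. g t \<noteq> 0}"
  then have "cmod (g t) > 0" by simp
  from order_tendstoD(2)[OF lim this] obtain n where n: "supnorm (fdiff (x n) g) < cmod (g t)"
    by (auto simp: eventually_sequentially)
  have "cmod (x n t - g t) \<le> supnorm (fdiff (x n) g)"
    using norm_le_supnorm[OF BR_fdiff[of "x n" g]] assms by (simp add: fdiff_def)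
  with n have "x n t \<noteq> 0" by auto
  then show "t \<in> (\<Union>n. {t. x n t \<noteq> 0})" by blast
qed

lemma zero_in_A_alg: "(\<lambda>t. 0) \<in> A_alg"
  unfolding A_alg_def BR_iff by (auto intro: exI[of _ 0])

lemma cstar_subalgebra_A_alg: "cstar_subalgebra A_alg"
  unfolding cstar_subalgebra_def
proof (intro conjI ballI allI impI)
  show "A_alg \<subseteq> BR" unfolding A_alg_def by auto
  show "(\<lambda>t. 0) \<in> A_alg" by (rule zero_in_A_alg)
next
  fix x g assume h: "(\<forall>n. x n \<in> A_alg) \<and> g \<in> BR \<and> (\<lambda>n. supnorm (fdiff (x n) g)) \<longlonglongrightarrow> 0"
  then have "countable (\<Union>n. {t. x n t \<noteq> 0})" unfolding A_alg_def by auto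
  with h show "g \<in> A_alg"
    using support_subset_of_uniform_limit[of x g] unfolding A_alg_def
    by (auto intro: countable_subset)
qed (simp_all add: A_alg_fadd A_alg_fmul A_alg_fscale A_alg_fstar)

lemma commutative_alg_A_alg: "commutative_alg A_alg"
  unfolding commutative_alg_def fmul_def by (simp add: mult.commute)

lemma not_unital_alg_A_alg: "\<not> unital_alg A_alg"
proof
  assume "unital_alg A_alg"
  then obtain e where e: "e \<in> A_alg" "\<forall>f\<in>A_alg. fmul e f = f" unfolding unital_alg_def by blast
  obtain t where "e t = 0" using e(1) countable_support_imp_zero unfolding A_alg_def by blast
  moreover have "fmul e (indicator {t}) t = 1"
    using e(2) indicator_singleton_in_A_alg by simp
  ultimately show False by (simp add: fmul_def)
qed

lemma not_rickart_A_alg: "\<not> rickart A_alg"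
proof
  assume "rickart A_alg"
  then obtain p where p: "p \<in> A_alg"
    and annihilator: "{z \<in> A_alg. fmul (\<lambda>t. 0) z = (\<lambda>t. 0)} = {fmul p y | y. y \<in> A_alg}"
    using zero_in_A_alg unfolding rickart_def projection_in_def by blast
  obtain t where "p t = 0" using p countable_support_imp_zero unfolding A_alg_def by blast
  moreover have "indicator {t} \<in> {fmul p y | y. y \<in> A_alg}"
    using annihilator indicator_singleton_in_A_alg by (auto simp: fmul_def)
  then obtain y where "indicator {t} = fmul p y" by blast
  then have "(1::complex) = p t * y t" by (metis fmul_def indicator_simps(1) singletonI)
  ultimately show False by simp
qed

lemma positive_in_A_alg_iff: "positive_in A_alg a \<longleftrightarrow> a \<in> A_alg \<and> (\<forall>t. 0 \<le> a t)"
proof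
  assume "positive_in A_alg a"
  then obtain b where b: "b \<in> A_alg" "a = fmul (fstar b) b" unfolding positive_in_def by blast
  then have "a t = complex_of_real ((cmod (b t))\<^sup>2)" for t
    using complex_norm_square[of "b t"] by (simp add: fmul_def fstar_def mult.commute)
  with b show "a \<in> A_alg \<and> (\<forall>t. 0 \<le> a t)"
    by (simp add: A_alg_fmul A_alg_fstar less_eq_complex_def)
next
  assume a: "a \<in> A_alg \<and> (\<forall>t. 0 \<le> a t)"
  then have nonneg: "Im (a t) = 0" "0 \<le> Re (a t)" for t
    by (simp_all add: less_eq_complex_def)
  obtain M where M: "\<forall>t. cmod (a t) \<le> M" using a unfolding A_alg_def BR_iff by blast
  define b where "b = (\<lambda>t. complex_of_real (sqrt (Re (a t))))"
  have "cmod (b t) \<le> sqrt M" for t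
  proof -
    have "Re (a t) \<le> M" using M complex_Re_le_cmod order_trans by blast
    then show ?thesis using nonneg(2) by (simp add: b_def)
  qed
  moreover have "{t. b t \<noteq> 0} \<subseteq> {t. a t \<noteq> 0}"
    by (auto simp: b_def)
  ultimately have "b \<in> A_alg"
    using a unfolding A_alg_def BR_iff by (auto intro: countable_subset)
  moreover have "a = fmul (fstar b) b"
    using nonneg by (auto simp: fmul_def fstar_def b_def complex_eq_iff)
  ultimately show "positive_in A_alg a" unfolding positive_in_def by blast
qed

lemma le_in_A_alg_iff: "a \<in> A_alg \<Longrightarrow> b \<in> A_alg \<Longrightarrow> le_in A_alg a b \<longleftrightarrow> a \<le> b"
  unfolding le_in_def positive_in_A_alg_iff
  using A_alg_fdiff[of b a] by (auto simp: fdiff_def le_fun_def less_eq_complex_def)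

lemma selfadj_iff_real: "selfadj f \<longleftrightarrow> (\<forall>t. f t \<in> \<real>)"
  by (auto simp: selfadj_def fstar_def fun_eq_iff Reals_cnj_iff)

lemma pointwise_SUP_in_A_alg:
  fixes x :: "nat \<Rightarrow> fn"
  assumes A: "\<And>n. x n \<in> A_alg" and real: "\<And>n t. x n t \<in> \<real>"
    and bound: "\<And>n t. cmod (x n t) \<le> M"
  defines "s \<equiv> \<lambda>t. complex_of_real (SUP n. Re (x n t))"
  shows "s \<in> A_alg" and "x n \<le> s" and "(\<And>n. x n \<le> u) \<Longrightarrow> s \<le> u"
proof -
  have bdd: "bdd_above (range (\<lambda>n. Re (x n t)))" for t
    using bound abs_Re_le_cmod by (meson abs_le_D1 bdd_aboveI2 order_trans)
  have upper: "Re (x n t) \<le> Re (s t)" for n t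
    unfolding s_def using cSUP_upper[OF _ bdd] by simp
  have least: "(\<And>n. Re (x n t) \<le> c) \<Longrightarrow> Re (s t) \<le> c" for t c
    unfolding s_def by (simp add: cSUP_least)
  have im: "Im (x n t) = 0" for n t using real complex_is_Real_iff by blast
  show "x n \<le> s" using upper im by (simp add: le_fun_def less_eq_complex_def s_def)
  show "s \<le> u" if "\<And>n. x n \<le> u"
    using that least im by (simp add: le_fun_def less_eq_complex_def s_def)
  have "cmod (s t) \<le> M" for t
  proof -
    have "Re (s t) \<le> M" using bound complex_Re_le_cmod by (meson least order_trans)
    moreover have "- M \<le> Re (s t)"
      using upper[of 0 t] bound[of 0 t] abs_Re_le_cmod[of "x 0 t"] by linarith
    ultimately show ?thesis by (simp add: s_def)
  qed
  moreover have "{t. s t \<noteq> 0} \<subseteq> (\<Union>n. {t. x n t \<noteq> 0})"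
  proof -
    have "s t = 0" if "\<forall>n. x n t = 0" for t using that by (simp add: s_def)
    then show ?thesis by blast
  qed
  moreover have "countable (\<Union>n. {t. x n t \<noteq> 0})"
    using A unfolding A_alg_def by auto
  ultimately show "s \<in> A_alg" unfolding A_alg_def BR_iff by (auto intro: countable_subset)
qed

lemma monotone_sigma_complete_A_alg: "monotone_sigma_complete A_alg"
  unfolding monotone_sigma_complete_def
proof (intro allI impI)
  fix x :: "nat \<Rightarrow> fn"
  assume h: "(\<forall>n. x n \<in> A_alg \<and> selfadj (x n)) \<and> (\<forall>n. le_in A_alg (x n) (x (Suc n))) \<and>
     (\<exists>M. \<forall>n. supnorm (x n) \<le> M)"
  then obtain M where M: "\<forall>n. supnorm (x n) \<le> M" by blast
  have A: "x n \<in> A_alg" and real: "x n t \<in> \<real>" for n t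
    using h selfadj_iff_real by auto
  have bound: "cmod (x n t) \<le> M" for n t
  proof -
    have "x n \<in> BR" using A unfolding A_alg_def by simp
    then show ?thesis using M norm_le_supnorm order_trans by blast
  qed
  define s where "s = (\<lambda>t. complex_of_real (SUP n. Re (x n t)))"
  note sup = pointwise_SUP_in_A_alg[of x M, OF A real bound, folded s_def]
  show "\<exists>s\<in>A_alg. selfadj s \<and> (\<forall>n. le_in A_alg (x n) s) \<and>
        (\<forall>u\<in>A_alg. selfadj u \<and> (\<forall>n. le_in A_alg (x n) u) \<longrightarrow> le_in A_alg s u)"
  proof (intro bexI[of _ s] conjI allI ballI impI)
    show "selfadj s" unfolding selfadj_iff_real s_def by simp
    show "le_in A_alg (x n) s" for n using le_in_A_alg_iff[OF A sup(1)] sup(2) by simp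
    show "le_in A_alg s u" if u: "u \<in> A_alg" "selfadj u \<and> (\<forall>n. le_in A_alg (x n) u)" for u
    proof -
      have "x n \<le> u" for n using u le_in_A_alg_iff[OF A u(1)] by simp
      then show ?thesis using le_in_A_alg_iff[OF sup(1) u(1)] sup(3) by simp
    qed
  qed (rule sup(1))
qed

theorem mainTheorem11:
  shows "cstar_subalgebra A_alg \<and> commutative_alg A_alg \<and> \<not> unital_alg A_alg \<and>
         monotone_sigma_complete A_alg \<and> \<not> rickart A_alg"
  using cstar_subalgebra_A_alg commutative_alg_A_alg not_unital_alg_A_alg
    monotone_sigma_complete_A_alg not_rickart_A_alg by blast

end
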